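(* The step relation of algorithm BFS under the unfair daemon, $\mathrm{Step}=\mathrm{Step}^{(r)}\cup\mathrm{Step}^{(d)}\cup\mathrm{Step}^{(p)}$, is well-founded: from every initial configuration, every sequence of steps is finite (i.e. every execution reaches a terminal configuration, one in which no node is enabled).
   Context: Let $G$ be a finite, connected, undirected graph with node set $V$ and a distinguished node $r$ (the root). Each node $p$ has a fixed ordered list $N(p)$ of its neighbours. A configuration $\gamma$ assigns to each node $p$ a value $\gamma.p.d\in\mathbb N$ (unbounded) and a neighbour $\gamma.p.par\in N(p)$. For a non-root node $p$ let $Dist_p(\gamma)=\min\{\gamma.q.d+1 : q\in N(p)\}$. Algorithm BFS (Dolev et al.) has the following actions. Root: enabled iff $\gamma.r.d\neq 0$; executing it sets $r.d:=0$. Non-root $p$, action CD: enabled iff $\gamma.p.d\ne Dist_p(\gamma)$; executing sets $p.d:=Dist_p(\gamma)$. Non-root $p$, action CP: enabled iff $\gamma.p.d=Dist_p(\gamma)$ and $\gamma.q_0.d+1\neq\gamma.p.d$ where $q_0=\gamma.p.par$; executing sets $p.par$ to the first $q$ in $N(p)$ with $\gamma.q.d+1=\gamma.p.d$. A node is enabled if one of its actions is enabled. A step $\gamma\to\gamma'$ (relation $\mathrm{Step}$, unfair daemon) holds iff there is a nonempty set $S$ of nodes enabled in $\gamma$ such that $\gamma'$ is obtained by every $p\in S$ simultaneously executing its enabled action (evaluated in $\gamma$), all other nodes unchanged. $\mathrm{Step}^{(r)}$: steps with $\gamma.r.d\ne\gamma'.r.d$. $\mathrm{Step}^{(d)}$: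 steps with $\gamma.r.d=\gamma'.r.d$ and $\gamma.p.d\ne\gamma'.p.d$ for some $p$. $\mathrm{Step}^{(p)}$: steps with $\gamma.p.d=\gamma'.p.d$ for all $p$. A relation is well-founded if it admits no infinite forward chain. *)

theory Defs
  imports Main
begin

text \<open>Graph: node set V, root r, ordered neighbour lists N.
  A configuration is a pair (d, par) of functions on nodes.\<close>

type_synonym 'v config = "('v \<Rightarrow> nat) \<times> ('v \<Rightarrow> 'v)"

definition bfs_graph :: "'v set \<Rightarrow> 'v \<Rightarrow> ('v \<Rightarrow> 'v list) \<Rightarrow> bool" where
  "bfs_graph V r N \<longleftrightarrow>
     finite V \<and> r \<in> V \<and>
     (\<forall>p\<in>V. distinct (N p) \<and> p \<notin> set (N p) \<and> set (N p) \<subseteq> V) \<and>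
     (\<forall>p\<in>V. \<forall>q\<in>V. q \<in> set (N p) \<longleftrightarrow> p \<in> set (N q)) \<and>
     (\<forall>p\<in>V. (r, p) \<in> {(x, y). x \<in> V \<and> y \<in> set (N x)}\<^sup>*)"

definition valid_config :: "'v set \<Rightarrow> ('v \<Rightarrow> 'v list) \<Rightarrow> 'v config \<Rightarrow> bool" where
  "valid_config V N \<gamma> \<longleftrightarrow> (\<forall>p\<in>V. snd \<gamma> p \<in> set (N p))"

definition Dist :: "('v \<Rightarrow> 'v list) \<Rightarrow> 'v config \<Rightarrow> 'v \<Rightarrow> nat" where
  "Dist N \<gamma> p = Min {fst \<gamma> q + 1 | q. q \<in> set (N p)}"

definition root_enabled :: "'v config \<Rightarrow> 'v \<Rightarrow> bool" where
  "root_enabled \<gamma> r \<longleftrightarrow> fst \<gamma> r \<noteq> 0"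

definition CD_enabled :: "('v \<Rightarrow> 'v list) \<Rightarrow> 'v config \<Rightarrow> 'v \<Rightarrow> bool" where
  "CD_enabled N \<gamma> p \<longleftrightarrow> fst \<gamma> p \<noteq> Dist N \<gamma> p"

definition CP_enabled :: "('v \<Rightarrow> 'v list) \<Rightarrow> 'v config \<Rightarrow> 'v \<Rightarrow> bool" where
  "CP_enabled N \<gamma> p \<longleftrightarrow> fst \<gamma> p = Dist N \<gamma> p \<and> fst \<gamma> (snd \<gamma> p) + 1 \<noteq> fst \<gamma> p"

definition enabled :: "'v \<Rightarrow> ('v \<Rightarrow> 'v list) \<Rightarrow> 'v config \<Rightarrow> 'v \<Rightarrow> bool" where
  "enabled r N \<gamma> p \<longleftrightarrow>
     (if p = r then root_enabled \<gamma> r else CD_enabled N \<gamma> p \<or> CP_enabled N \<gamma> p)"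

definition new_d :: "'v \<Rightarrow> ('v \<Rightarrow> 'v list) \<Rightarrow> 'v config \<Rightarrow> 'v \<Rightarrow> nat" where
  "new_d r N \<gamma> p =
     (if p = r then 0 else if CD_enabled N \<gamma> p then Dist N \<gamma> p else fst \<gamma> p)"

definition new_par :: "'v \<Rightarrow> ('v \<Rightarrow> 'v list) \<Rightarrow> 'v config \<Rightarrow> 'v \<Rightarrow> 'v" where
  "new_par r N \<gamma> p =
     (if p \<noteq> r \<and> CP_enabled N \<gamma> p
      then the (find (\<lambda>q. fst \<gamma> q + 1 = fst \<gamma> p) (N p))
      else snd \<gamma> p)"

definition Step :: "'v set \<Rightarrow> 'v \<Rightarrow> ('v \<Rightarrow> 'v list) \<Rightarrow> 'v config \<Rightarrow> 'v config \<Rightarrow> bool" where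
  "Step V r N \<gamma> \<gamma>' \<longleftrightarrow> valid_config V N \<gamma> \<and>
     (\<exists>S. S \<noteq> {} \<and> S \<subseteq> V \<and> (\<forall>p\<in>S. enabled r N \<gamma> p) \<and>
        \<gamma>' = ((\<lambda>p. if p \<in> S then new_d r N \<gamma> p else fst \<gamma> p),
              (\<lambda>p. if p \<in> S then new_par r N \<gamma> p else snd \<gamma> p)))"

definition Step_r :: "'v set \<Rightarrow> 'v \<Rightarrow> ('v \<Rightarrow> 'v list) \<Rightarrow> 'v config \<Rightarrow> 'v config \<Rightarrow> bool" where
  "Step_r V r N \<gamma> \<gamma>' \<longleftrightarrow> Step V r N \<gamma> \<gamma>' \<and> fst \<gamma> r \<noteq> fst \<gamma>' r"

definition Step_d :: "'v set \<Rightarrow> 'v \<Rightarrow> ('v \<Rightarrow> 'v list) \<Rightarrow> 'v config \<Rightarrow> 'v config \<Rightarrow> bool" where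
  "Step_d V r N \<gamma> \<gamma>' \<longleftrightarrow> Step V r N \<gamma> \<gamma>' \<and> fst \<gamma> r = fst \<gamma>' r \<and>
     (\<exists>p\<in>V. fst \<gamma> p \<noteq> fst \<gamma>' p)"

definition Step_p :: "'v set \<Rightarrow> 'v \<Rightarrow> ('v \<Rightarrow> 'v list) \<Rightarrow> 'v config \<Rightarrow> 'v config \<Rightarrow> bool" where
  "Step_p V r N \<gamma> \<gamma>' \<longleftrightarrow> Step V r N \<gamma> \<gamma>' \<and> (\<forall>p\<in>V. fst \<gamma> p = fst \<gamma>' p)"

end

theory Submission
  imports Defs
begin

(* Every d-value stays below the initial maximum plus the hop distance of its node from the
   root. By induction on v, the values below v eventually freeze along any execution: a node
   that takes the value v after that moment is supported by a frozen neighbour with value v - 1,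
   so it can neither rise above v nor drop below it again. Hence all d-values become constant,
   after which every step only changes parents, and each such step strictly shrinks the finite
   set of nodes whose action CP is enabled. *)

lemma bfs_graph_neighbour_in_V:
  "bfs_graph V r N \<Longrightarrow> p \<in> V \<Longrightarrow> q \<in> set (N p) \<Longrightarrow> q \<in> V"
  unfolding bfs_graph_def by blast

lemma bfs_graph_neighbour_sym:
  "bfs_graph V r N \<Longrightarrow> p \<in> V \<Longrightarrow> q \<in> V \<Longrightarrow> p \<in> set (N q) \<Longrightarrow> q \<in> set (N p)"
  unfolding bfs_graph_def by blast

lemma bfs_graph_neighbours_nonempty:
  assumes G: "bfs_graph V r N" and p: "p \<in> V" "p \<noteq> r"
  shows "N p \<noteq> []"
proof -
  let ?E = "{(x, y). x \<in> V \<and> y \<in> set (N x)}"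
  have "(r, p) \<in> ?E\<^sup>*" using G p unfolding bfs_graph_def by blast
  then obtain x where "(x, p) \<in> ?E" using p(2) by (cases rule: rtranclE) auto
  hence "x \<in> set (N p)" using bfs_graph_neighbour_sym[OF G p(1)] by blast
  thus ?thesis by auto
qed

lemma finite_neighbour_values: "finite {fst \<gamma> q + 1 | q. q \<in> set (N p)}"
proof -
  have "{fst \<gamma> q + 1 | q. q \<in> set (N p)} = (\<lambda>q. fst \<gamma> q + 1) ` set (N p)" by auto
  thus ?thesis by simp
qed

lemma Dist_le_neighbour: "q \<in> set (N p) \<Longrightarrow> Dist N \<gamma> p \<le> fst \<gamma> q + 1"
  unfolding Dist_def by (rule Min_le[OF finite_neighbour_values]) auto

lemma Dist_attained: "N p \<noteq> [] \<Longrightarrow> \<exists>q\<in>set (N p). Dist N \<gamma> p = fst \<gamma> q + 1"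
proof -
  assume "N p \<noteq> []"
  hence "{fst \<gamma> q + 1 | q. q \<in> set (N p)} \<noteq> {}" by (cases "N p") auto
  hence "Dist N \<gamma> p \<in> {fst \<gamma> q + 1 | q. q \<in> set (N p)}"
    unfolding Dist_def by (rule Min_in[OF finite_neighbour_values])
  thus ?thesis by auto
qed

lemma Dist_cong:
  "(\<And>q. q \<in> set (N p) \<Longrightarrow> fst \<gamma> q = fst \<gamma>' q) \<Longrightarrow> Dist N \<gamma> p = Dist N \<gamma>' p"
  unfolding Dist_def by (metis (no_types, lifting))

lemma Step_d_changed:
  assumes "Step V r N \<gamma> \<gamma>'" "fst \<gamma>' p \<noteq> fst \<gamma> p"
  shows "p \<in> V \<and> fst \<gamma>' p = (if p = r then 0 else Dist N \<gamma> p)"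
  using assms unfolding Step_def by (auto simp: new_d_def split: if_splits)

definition CP_nodes :: "'v set \<Rightarrow> 'v \<Rightarrow> ('v \<Rightarrow> 'v list) \<Rightarrow> 'v config \<Rightarrow> 'v set" where
  "CP_nodes V r N \<gamma> = {p \<in> V. p \<noteq> r \<and> CP_enabled N \<gamma> p}"

text \<open>A step that changes no d-value is executed by CP actions only; each of them disables
  itself, and since the d-values are unchanged, no CP action becomes newly enabled.\<close>

lemma Step_p_CP_nodes_psubset:
  assumes G: "bfs_graph V r N" and step: "Step_p V r N \<gamma> \<gamma>'"
  shows "CP_nodes V r N \<gamma>' \<subset> CP_nodes V r N \<gamma>"
proof -
  have same: "\<forall>p\<in>V. fst \<gamma> p = fst \<gamma>' p" using step unfolding Step_p_def by blast
  from step obtain S where valid: "valid_config V N \<gamma>" and S: "S \<noteq> {}" "S \<subseteq> V"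
      "\<forall>p\<in>S. enabled r N \<gamma> p"
    and \<gamma>': "\<gamma>' = ((\<lambda>p. if p \<in> S then new_d r N \<gamma> p else fst \<gamma> p),
                 (\<lambda>p. if p \<in> S then new_par r N \<gamma> p else snd \<gamma> p))"
    unfolding Step_p_def Step_def by blast
  hence d': "\<And>p. fst \<gamma>' p = (if p \<in> S then new_d r N \<gamma> p else fst \<gamma> p)"
    and par': "\<And>p. snd \<gamma>' p = (if p \<in> S then new_par r N \<gamma> p else snd \<gamma> p)" by simp_all
  have executed_CP: "p \<in> CP_nodes V r N \<gamma>" if pS: "p \<in> S" for p
  proof -
    have pV: "p \<in> V" and en: "enabled r N \<gamma> p" using pS S by auto
    have "p \<noteq> r"
      using en d'[of r] same pV pS unfolding enabled_def root_enabled_def new_d_def by auto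
    moreover have "\<not> CD_enabled N \<gamma> p"
    proof
      assume CD: "CD_enabled N \<gamma> p"
      hence "fst \<gamma>' p = Dist N \<gamma> p" using d'[of p] pS \<open>p \<noteq> r\<close> unfolding new_d_def by simp
      with CD same pV show False unfolding CD_enabled_def by simp
    qed
    ultimately show ?thesis using en pV unfolding enabled_def CP_nodes_def by simp
  qed
  have CP_disabled: "p \<notin> CP_nodes V r N \<gamma>'" if pS: "p \<in> S" for p
  proof -
    have pV: "p \<in> V" using pS S(2) by blast
    have nr: "p \<noteq> r" and cp: "CP_enabled N \<gamma> p"
      using executed_CP[OF pS] unfolding CP_nodes_def by auto
    obtain q where "q \<in> set (N p)" "Dist N \<gamma> p = fst \<gamma> q + 1"
      using Dist_attained[of N p \<gamma>, OF bfs_graph_neighbours_nonempty[OF G pV nr]] by blast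
    hence "find (\<lambda>q. fst \<gamma> q + 1 = fst \<gamma> p) (N p) \<noteq> None"
      using cp unfolding find_None_iff CP_enabled_def by auto
    then obtain x where x: "find (\<lambda>q. fst \<gamma> q + 1 = fst \<gamma> p) (N p) = Some x" by blast
    hence "fst \<gamma> x + 1 = fst \<gamma> p" "x \<in> set (N p)" unfolding find_Some_iff by auto
    moreover have "snd \<gamma>' p = x" using par'[of p] pS nr cp x unfolding new_par_def by simp
    ultimately show ?thesis
      using same pV bfs_graph_neighbour_in_V[OF G pV] unfolding CP_nodes_def CP_enabled_def
      by auto
  qed
  have no_new_CP: "p \<in> CP_nodes V r N \<gamma>" if p: "p \<in> CP_nodes V r N \<gamma>'" "p \<notin> S" for p
  proof -
    have pV: "p \<in> V" using p unfolding CP_nodes_def by simp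
    have "Dist N \<gamma>' p = Dist N \<gamma> p"
      using same bfs_graph_neighbour_in_V[OF G pV] by (intro Dist_cong) auto
    moreover have "snd \<gamma> p \<in> V"
      using valid pV bfs_graph_neighbour_in_V[OF G pV] unfolding valid_config_def by blast
    ultimately show ?thesis
      using p par'[of p] same unfolding CP_nodes_def CP_enabled_def by auto
  qed
  from executed_CP CP_disabled no_new_CP S(1) show ?thesis by blast
qed

lemma min_Suc_eq:
  "min x (Suc v) = (if min x v < v then min x v else if x = v then v else Suc v)" for x v :: nat
  by auto

lemma eventually_constant_if_rises_persist:
  assumes rise: "\<And>t s. T0 \<le> t \<Longrightarrow> \<not> P t \<Longrightarrow> P (Suc t) \<Longrightarrow> t < s \<Longrightarrow> P s"
  shows "\<exists>b. \<forall>\<^sub>F t in sequentially. P t = b"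
proof (cases "\<exists>t\<ge>T0. \<not> P t \<and> P (Suc t)")
  case True
  then obtain t where "T0 \<le> t" "\<not> P t" "P (Suc t)" by blast
  hence "\<forall>s\<ge>Suc t. P s = True" using rise by auto
  thus ?thesis unfolding eventually_sequentially by blast
next
  case no_rise: False
  show ?thesis
  proof (cases "\<exists>t\<ge>T0. \<not> P t")
    case True
    then obtain t where t: "T0 \<le> t" "\<not> P t" by blast
    have "\<not> P s" if "t \<le> s" for s
      using that
    proof (induction s rule: dec_induct)
      case (step s)
      with t(1) no_rise show ?case by (meson le_trans)
    qed (use t in simp)
    thus ?thesis unfolding eventually_sequentially by (metis (full_types))
  next
    case False
    thus ?thesis unfolding eventually_sequentially by (metis (full_types))
  qed
qed

locale bfs_execution =
  fixes V :: "'v set" and r :: 'v and N :: "'v \<Rightarrow> 'v list" and f :: "nat \<Rightarrow> 'v config"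
  assumes graph: "bfs_graph V r N" and steps: "\<And>t. Step V r N (f t) (f (Suc t))"
begin

abbreviation d :: "nat \<Rightarrow> 'v \<Rightarrow> nat" where "d t p \<equiv> fst (f t) p"

lemma finite_V: "finite V" and root_in_V: "r \<in> V"
  using graph unfolding bfs_graph_def by auto

lemma d_root_Suc_le: "d (Suc t) r \<le> d t r"
  using Step_d_changed[OF steps, of t r] by fastforce

lemma d_Suc_le_neighbour:
  assumes "q \<in> set (N p)"
  shows "d (Suc t) p \<le> max (d t p) (d t q + 1)"
  using Step_d_changed[OF steps, of t p] Dist_le_neighbour[of q N p "f t", OF assms]
  by (cases "d (Suc t) p = d t p") (auto split: if_splits)

lemma d_le_hops:
  "(r, p) \<in> {(x, y). x \<in> V \<and> y \<in> set (N x)} ^^ n \<Longrightarrow> d t p \<le> Max (d 0 ` V) + n"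
proof (induction n arbitrary: p t)
  case 0
  hence "p = r" by simp
  have "d t r \<le> d 0 r"
    by (induction t) (use d_root_Suc_le le_trans in blast)+
  also have "\<dots> \<le> Max (d 0 ` V)" using finite_V root_in_V by simp
  finally show ?case using \<open>p = r\<close> by simp
next
  case (Suc n)
  note hops_IH = Suc.IH
  from Suc.prems obtain x where x: "(r, x) \<in> {(x, y). x \<in> V \<and> y \<in> set (N x)} ^^ n" "x \<in> V"
    "p \<in> set (N x)" by auto
  have pV: "p \<in> V" using bfs_graph_neighbour_in_V[OF graph x(2,3)] .
  have xN: "x \<in> set (N p)" using bfs_graph_neighbour_sym[OF graph pV x(2,3)] .
  show ?case
  proof (induction t)
    case 0
    have "d 0 p \<le> Max (d 0 ` V)" using finite_V pV by simp
    thus ?case by simp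
  next
    case (Suc t) with d_Suc_le_neighbour[OF xN, of t] hops_IH[OF x(1), of t] show ?case by simp
  qed
qed

lemma d_bounded:
  assumes "p \<in> V"
  shows "\<exists>B. \<forall>t. d t p \<le> B"
proof -
  have "(r, p) \<in> {(x, y). x \<in> V \<and> y \<in> set (N x)}\<^sup>*"
    using graph assms unfolding bfs_graph_def by blast
  then obtain n where "(r, p) \<in> {(x, y). x \<in> V \<and> y \<in> set (N x)} ^^ n"
    by (blast dest: rtrancl_imp_relpow)
  thus ?thesis using d_le_hops by blast
qed

text \<open>The value min (d t p) v determines both whether d t p < v and, if so, d t p itself:
  so this says that eventually the nodes with value below v and their values no longer change.\<close>

definition frozen_below :: "nat \<Rightarrow> bool" where
  "frozen_below v \<longleftrightarrow> (\<exists>c. \<forall>\<^sub>F t in sequentially. \<forall>p\<in>V. min (d t p) v = c p)"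

lemma rise_to_frontier_persists:
  assumes frozen: "\<forall>s\<ge>T0. \<forall>q\<in>V. min (d s q) v = c q" and "T0 \<le> t" and pV: "p \<in> V"
    and rise: "d t p \<noteq> v" "d (Suc t) p = v" and "t < s"
  shows "d s p = v"
proof -
  have frozen_since_t: "min (d s q) v = min (d t q) v" if "t \<le> s" "q \<in> V" for s q
    using frozen \<open>T0 \<le> t\<close> that by (metis le_trans order_refl)
  have support: "\<exists>q\<in>set (N p). \<forall>s\<ge>t. d s q + 1 = v" if nr: "p \<noteq> r"
  proof -
    obtain q where q: "q \<in> set (N p)" "Dist N (f t) p = d t q + 1"
      using Dist_attained[of N p "f t", OF bfs_graph_neighbours_nonempty[OF graph pV nr]] by blast
    have "d (Suc t) p = Dist N (f t) p" using Step_d_changed[OF steps, of t p] rise nr by simp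
    with q(2) rise(2) have "d t q < v" by simp
    hence "d s q + 1 = v" if "t \<le> s" for s
      using frozen_since_t[OF that bfs_graph_neighbour_in_V[OF graph pV q(1)]] q(2) rise(2)
        \<open>d (Suc t) p = Dist N (f t) p\<close>
      by (simp add: min_def split: if_splits)
    with q(1) show ?thesis by blast
  qed
  have upper: "d s p \<le> v" if "Suc t \<le> s" for s
    using that
  proof (induction s rule: dec_induct)
    case base
    show ?case using rise(2) by simp
  next
    case (step s)
    show ?case
    proof (cases "p = r")
      case True
      with step.IH d_root_Suc_le[of s] show ?thesis by simp
    next
      case False
      then obtain q where "q \<in> set (N p)" "d s q + 1 = v"
        using support step.hyps by (meson Suc_leD le_trans)
      with d_Suc_le_neighbour[of q p s] step.IH show ?thesis by simp
    qed
  qed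
  have "min (d s p) v = min (d (Suc t) p) v"
    using frozen_since_t[of s p] frozen_since_t[of "Suc t" p] pV \<open>t < s\<close> by simp
  with upper \<open>t < s\<close> rise(2) show ?thesis by simp
qed

lemma frozen_below_Suc:
  assumes "frozen_below v"
  shows "frozen_below (Suc v)"
proof -
  obtain c where ev_frozen: "\<forall>\<^sub>F t in sequentially. \<forall>p\<in>V. min (d t p) v = c p"
    using assms unfolding frozen_below_def by blast
  then obtain T0 where T0: "\<forall>s\<ge>T0. \<forall>q\<in>V. min (d s q) v = c q"
    unfolding eventually_sequentially by blast
  have "\<exists>b. \<forall>\<^sub>F t in sequentially. (d t p = v) = b" if pV: "p \<in> V" for p
    using rise_to_frontier_persists[OF T0 _ pV]
    by (intro eventually_constant_if_rises_persist[of T0]) blast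
  then obtain b where "\<forall>p\<in>V. \<forall>\<^sub>F t in sequentially. (d t p = v) = b p" by metis
  hence ev_at_v: "\<forall>\<^sub>F t in sequentially. \<forall>p\<in>V. (d t p = v) = b p"
    using finite_V by (rule eventually_ball_finite[rotated])
  define c' where "c' p = (if c p < v then c p else if b p then v else Suc v)" for p
  from ev_frozen ev_at_v have "\<forall>\<^sub>F t in sequentially. \<forall>p\<in>V. min (d t p) (Suc v) = c' p"
    by eventually_elim (simp add: min_Suc_eq c'_def)
  thus ?thesis unfolding frozen_below_def by blast
qed

lemma frozen_below_all: "frozen_below v"
proof (induction v)
  case 0 show ?case unfolding frozen_below_def by auto
qed (rule frozen_below_Suc)

lemma d_eventually_constant: "\<exists>c. \<forall>\<^sub>F t in sequentially. \<forall>p\<in>V. d t p = c p"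
proof -
  have "\<exists>c. \<forall>\<^sub>F t in sequentially. d t p = c" if pV: "p \<in> V" for p
  proof -
    obtain B where B: "\<forall>t. d t p \<le> B" using d_bounded[OF pV] by blast
    obtain c where "\<forall>\<^sub>F t in sequentially. \<forall>q\<in>V. min (d t q) (Suc B) = c q"
      using frozen_below_all unfolding frozen_below_def by blast
    hence "\<forall>\<^sub>F t in sequentially. d t p = c p"
      by eventually_elim (metis pV B le_SucI min.absorb1)
    thus ?thesis by blast
  qed
  then obtain c where "\<forall>p\<in>V. \<forall>\<^sub>F t in sequentially. d t p = c p" by metis
  hence "\<forall>\<^sub>F t in sequentially. \<forall>p\<in>V. d t p = c p"
    using finite_V by (rule eventually_ball_finite[rotated])
  thus ?thesis by blast
qed

lemma execution_impossible: False
proof -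
  obtain c T where T: "\<forall>t\<ge>T. \<forall>p\<in>V. d t p = c p"
    using d_eventually_constant unfolding eventually_sequentially by blast
  let ?C = "\<lambda>i. CP_nodes V r N (f (T + i))"
  obtain i where not_psubset: "(?C (Suc i), ?C i) \<notin> finite_psubset"
    using wf_no_infinite_down_chainE[OF wf_finite_psubset, of ?C] by blast
  have "Step_p V r N (f (T + i)) (f (Suc (T + i)))"
    using steps T unfolding Step_p_def by simp
  hence "?C (Suc i) \<subset> ?C i" using Step_p_CP_nodes_psubset[OF graph] by simp
  moreover have "finite (?C i)" using finite_V unfolding CP_nodes_def by simp
  ultimately show False using not_psubset unfolding finite_psubset_def by simp
qed

end

theorem theorem1:
  fixes V :: "'v set" and r :: 'v and N :: "'v \<Rightarrow> 'v list"
  assumes "bfs_graph V r N"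
  shows "Step V r N = (\<lambda>\<gamma> \<gamma>'. Step_r V r N \<gamma> \<gamma>' \<or> Step_d V r N \<gamma> \<gamma>' \<or> Step_p V r N \<gamma> \<gamma>')
         \<and> \<not> (\<exists>f :: nat \<Rightarrow> 'v config. \<forall>i. Step V r N (f i) (f (Suc i)))"
proof
  have "r \<in> V" using assms unfolding bfs_graph_def by blast
  thus "Step V r N = (\<lambda>\<gamma> \<gamma>'. Step_r V r N \<gamma> \<gamma>' \<or> Step_d V r N \<gamma> \<gamma>' \<or> Step_p V r N \<gamma> \<gamma>')"
    unfolding Step_r_def Step_d_def Step_p_def by (intro ext) blast
  show "\<not> (\<exists>f :: nat \<Rightarrow> 'v config. \<forall>i. Step V r N (f i) (f (Suc i)))"
  proof
    assume "\<exists>f :: nat \<Rightarrow> 'v config. \<forall>i. Step V r N (f i) (f (Suc i))"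
    then obtain f :: "nat \<Rightarrow> 'v config" where "\<forall>i. Step V r N (f i) (f (Suc i))" by blast
    with assms interpret bfs_execution V r N f by unfold_locales auto
    show False by (rule execution_impossible)
  qed
qed

end
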